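(* Let $0<p<1$, $0\le r\le1$ with $p\ne r$, $m:=r/p>1$, $T\in\mathbb{N}$ and $k\in\mathbb{N}$. Let $(H_i)_{i\ge1}$ be i.i.d. with $\mathbb{P}(H>n)=\frac{r-p}{(1-p)m^n-(1-r)}$ for $n\ge0$, $H_0:=T$, $N_T:=\min\{i\ge1:H_i>T\}$. Define the $k$-sample node depths: conditionally on $\{N_T\ge k\}$, choose a subset of $k$ tips $s_0<s_1<\dots<s_{k-1}$ uniformly at random among the $\binom{N_T}{k}$ subsets of $\{0,\dots,N_T-1\}$ (independently of $(H_i)$ given $N_T$), and set $H_{k,0}:=T$ and $H_{k,i}:=\max\{H_{s_{i-1}+1},\dots,H_{s_i}\}$ for $1\le i<k$. For $y\in(0,1)$, define the Bernoulli$(y)$-sample node depths: take an independent copy $(\tilde H_i)_{i\ge1}$ of $(H_i)$ with $\tilde H_0:=T$, $\tilde N_T:=\min\{i\ge1:\tilde H_i>T\}$, select each tip $i\in\{0,\dots,\tilde N_T-1\}$ independently with probability $y$, let $K$ be the number of selected tips and $t_0<\dots<t_{K-1}$ the selected tips, and set $H_{y,0}:=T$, $H_{y,i}:=\max\{\tilde H_{t_{i-1}+1},\dots,\tilde H_{t_i}\}$ for $1\le i<K$. Let $$\mu_k(\mathrm{d}y):=\frac{k\,\delta_T\,y^{k-1}}{\bigl(1-(1-\delta_T)(1-y)\bigr)^{k+1}}\,\mathrm{d}y,\qquad y\in(0,1),\qquad \delta_T:=\mathbb{P}(H>T).$$ Then for all $x_0=T$ and $x_1,\dots,x_{k-1}\in\{1,2,\dots,T\}$,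 $$\mathbb{P}(H_{k,0}=x_0,\dots,H_{k,k-1}=x_{k-1}\mid N_T\ge k)=\int_0^1\mu_k(\mathrm{d}y)\,\mathbb{P}(H_{y,0}=x_0,\dots,H_{y,k-1}=x_{k-1}\mid K=k).$$
   Context: The sequence $(H_i)_{i\ge1}$ is the coalescent point process of a Bienaymé–Galton–Watson process with $(p,r)$-linear fractional offspring law $\mathbb{P}(\xi=0)=1-r$, $\mathbb{P}(\xi=k)=rp(1-p)^{k-1}$ ($k\ge1$): $H_i$ is the coalescent time of consecutive tips $i-1,i$, and the coalescent time of tips $i<j$ is $\max\{H_{i+1},\dots,H_j\}$. The CPP$(T)$ tree has tips $0,\dots,N_T-1$ with node depths $H_0=T,H_1,\dots,H_{N_T-1}$. $H_{k,i}$ (resp. $H_{y,i}$) is the coalescent time between the $(i-1)$-th and $i$-th sampled tips. $\mu_k$ is a probability measure on $(0,1)$. *)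

theory Defs
  imports "HOL-Probability.Probability"
begin

definition tailH :: "real \<Rightarrow> real \<Rightarrow> nat \<Rightarrow> real" where
  "tailH p r n = (r - p) / ((1 - p) * (r / p) ^ n - (1 - r))"

text \<open>N_T = min {i >= 1 : H_i > T} (H_0 := T is implicit).\<close>
definition NT :: "(nat \<Rightarrow> 'a \<Rightarrow> nat) \<Rightarrow> nat \<Rightarrow> 'a \<Rightarrow> nat" where
  "NT H T \<omega> = (LEAST i. 1 \<le> i \<and> T < H i \<omega>)"

definition sample_depths :: "(nat \<Rightarrow> nat) \<Rightarrow> nat \<Rightarrow> nat set \<Rightarrow> nat list" where
  "sample_depths h T S =
     (let s = sorted_list_of_set S
      in map (\<lambda>i. if i = 0 then T else Max (h ` {s ! (i - 1)<..s ! i})) [0..<card S])"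

text \<open>Joint law of (randomness of the H's, k-sample of tips): given \<omega>, a uniformly random
  k-subset of {0,...,N_T-1} (only defined meaningfully on {N_T >= k}).\<close>
definition k_sample :: "'a measure \<Rightarrow> (nat \<Rightarrow> 'a \<Rightarrow> nat) \<Rightarrow> nat \<Rightarrow> nat \<Rightarrow> ('a \<times> nat set) measure" where
  "k_sample M H T k =
     M \<bind> (\<lambda>\<omega>. distr
        (measure_pmf (if k \<le> NT H T \<omega>
                      then pmf_of_set {S. S \<subseteq> {0..<NT H T \<omega>} \<and> card S = k}
                      else return_pmf {}))
        (M \<Otimes>\<^sub>M count_space UNIV) (\<lambda>S. (\<omega>, S)))"

definition bern_sample :: "'a measure \<Rightarrow> (nat \<Rightarrow> 'a \<Rightarrow> nat) \<Rightarrow> nat \<Rightarrow> real \<Rightarrow> ('a \<times> nat set) measure" where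
  "bern_sample M H T y =
     M \<bind> (\<lambda>\<omega>. distr
        (measure_pmf (map_pmf (\<lambda>f. {i. f i}) (Pi_pmf {0..<NT H T \<omega>} False (\<lambda>_. bernoulli_pmf y))))
        (M \<Otimes>\<^sub>M count_space UNIV) (\<lambda>S. (\<omega>, S)))"

definition mu :: "nat \<Rightarrow> real \<Rightarrow> real measure" where
  "mu k \<delta> = density lborel
     (\<lambda>y. ennreal (indicator {0<..<1} y * (real k * \<delta> * y ^ (k - 1) / (1 - (1 - \<delta>) * (1 - y)) ^ (k + 1))))"

end

(*
  Given the tree, both samples pick a set S of tips whose law depends only on |S| and on the
  number n of tips: 1 / C(n,k) for each k-subset, resp. y^k (1-y)^(n-k) for the Bernoulli(y)
  sample.  Let c_n be the sum, over the k-subsets S of the n tips, of the probability that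
  N_T = n and that the subtree spanned by S has node depths xs.  Then the left-hand side is
  (Sum_n c_n / C(n,k)) / P(N_T >= k), and the Bernoulli conditional probability is
  (Sum_n y^k (1-y)^(n-k) c_n) / P(K = k).
  By independence N_T is geometric, P(N_T = n) = delta (1-delta)^(n-1), so
  P(N_T >= k) = (1-delta)^(k-1), and the negative binomial series gives
  P(K = k) = delta (1-delta)^(k-1) y^k / (1 - (1-delta)(1-y))^(k+1).  The density of mu_k is
  exactly k / ((1-delta)^(k-1) y) times P(K = k), so integrating against mu_k turns
  y^k (1-y)^(n-k) c_n / P(K = k) into k c_n / (1-delta)^(k-1) times the Beta integral
  of y^(k-1) (1-y)^(n-k), i.e. into c_n / (C(n,k) (1-delta)^(k-1)).
*)

theory Submission
  imports Defs
begin

section \<open>Sampling tips given their number\<close>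

definition tip_sample ::
    "'a measure \<Rightarrow> ('a \<Rightarrow> nat) \<Rightarrow> (nat \<Rightarrow> nat set pmf) \<Rightarrow> ('a \<times> nat set) measure" where
  "tip_sample M N Q =
     M \<bind> (\<lambda>\<omega>. distr (measure_pmf (Q (N \<omega>))) (M \<Otimes>\<^sub>M count_space UNIV) (\<lambda>S. (\<omega>, S)))"

definition uniform_subsets :: "nat \<Rightarrow> nat \<Rightarrow> nat set pmf" where
  "uniform_subsets k n =
     (if k \<le> n then pmf_of_set {S. S \<subseteq> {0..<n} \<and> card S = k} else return_pmf {})"

definition bernoulli_subset :: "real \<Rightarrow> nat \<Rightarrow> nat set pmf" where
  "bernoulli_subset y n = map_pmf (\<lambda>f. {i. f i}) (Pi_pmf {0..<n} False (\<lambda>_. bernoulli_pmf y))"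

lemma k_sample_eq_tip_sample: "k_sample M H T k = tip_sample M (NT H T) (uniform_subsets k)"
  unfolding k_sample_def tip_sample_def uniform_subsets_def ..

lemma bern_sample_eq_tip_sample: "bern_sample M H T y = tip_sample M (NT H T) (bernoulli_subset y)"
  unfolding bern_sample_def tip_sample_def bernoulli_subset_def ..

lemma finite_subsets_card: "finite {S. S \<subseteq> {0..<n::nat} \<and> card S = k}"
  by (rule finite_subset[of _ "Pow {0..<n}"]) auto

lemma card_subsets_card: "card {S. S \<subseteq> {0..<n::nat} \<and> card S = k} = n choose k"
  using n_subsets[of "{0..<n}" k] by simp

lemma set_pmf_uniform_subsets: "set_pmf (uniform_subsets k n) \<subseteq> Pow {0..<n}"
proof (cases "k \<le> n")
  case True
  then have "{0..<k} \<in> {S. S \<subseteq> {0..<n} \<and> card S = k}" by simp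
  then have "{S. S \<subseteq> {0..<n} \<and> card S = k} \<noteq> {}" by blast
  then show ?thesis
    using True by (auto simp: uniform_subsets_def set_pmf_of_set[OF _ finite_subsets_card])
qed (simp add: uniform_subsets_def)

lemma pmf_uniform_subsets:
  assumes "S \<subseteq> {0..<n}" "card S = k"
  shows "pmf (uniform_subsets k n) S = 1 / real (n choose k)"
proof -
  have "k \<le> n" using assms card_mono[of "{0..<n}" S] by simp
  moreover from assms have "{S. S \<subseteq> {0..<n} \<and> card S = k} \<noteq> {}" by blast
  ultimately show ?thesis
    using assms finite_subsets_card[of n k] by (simp add: uniform_subsets_def card_subsets_card)
qed

lemma pmf_bernoulli_subset:
  assumes "0 \<le> y" "y \<le> 1" "S \<subseteq> {0..<n}"
  shows "pmf (bernoulli_subset y n) S = y ^ card S * (1 - y) ^ (n - card S)"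
proof -
  have "inj (\<lambda>f::nat \<Rightarrow> bool. {i. f i})"
    by (rule injI) auto
  then have "pmf (bernoulli_subset y n) S = pmf (Pi_pmf {0..<n} False (\<lambda>_. bernoulli_pmf y)) (\<lambda>i. i \<in> S)"
    unfolding bernoulli_subset_def using pmf_map_inj' by (metis Collect_mem_eq)
  also have "\<dots> = (\<Prod>i\<in>{0..<n}. if i \<in> S then y else 1 - y)"
    using assms by (subst pmf_Pi') (auto intro!: prod.cong)
  also have "\<dots> = y ^ card S * (1 - y) ^ card ({0..<n} - S)"
    using assms by (simp add: prod.If_cases Int_absorb1 Diff_eq)
  also have "card ({0..<n} - S) = n - card S"
    using assms by (simp add: card_Diff_subset finite_subset)
  finally show ?thesis .
qed

lemma set_pmf_bernoulli_subset: "set_pmf (bernoulli_subset y n) \<subseteq> Pow {0..<n}"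
  unfolding bernoulli_subset_def using set_Pi_pmf_subset[of "{0..<n}" False] by fastforce

lemma bernoulli_subset_clamp: "bernoulli_subset y = bernoulli_subset (min 1 (max 0 y))"
proof -
  have "bernoulli_pmf y = bernoulli_pmf (min 1 (max 0 y))"
    by (rule pmf_eqI) (simp add: bernoulli_pmf.rep_eq)
  then show ?thesis unfolding bernoulli_subset_def by simp
qed

lemma emeasure_tip_kernel:
  fixes P :: "nat set pmf"
  assumes "\<omega> \<in> space M" "set_pmf P \<subseteq> Pow {0..<n}"
    and X: "X \<in> sets (M \<Otimes>\<^sub>M count_space UNIV)"
  shows "emeasure (distr (measure_pmf P) (M \<Otimes>\<^sub>M count_space UNIV) (\<lambda>S. (\<omega>, S))) X
       = (\<Sum>S\<in>Pow {0..<n}. ennreal (pmf P S) * indicator X (\<omega>, S))"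
proof -
  have "(\<lambda>S. (\<omega>, S)) \<in> measurable (measure_pmf P) (M \<Otimes>\<^sub>M count_space UNIV)"
    using assms(1) by (auto simp: measurable_def space_pair_measure)
  then have "emeasure (distr (measure_pmf P) (M \<Otimes>\<^sub>M count_space UNIV) (\<lambda>S. (\<omega>, S))) X
      = emeasure (measure_pmf P) {S. (\<omega>, S) \<in> X}"
    using X by (simp add: emeasure_distr vimage_def)
  also have "\<dots> = (\<integral>\<^sup>+S. indicator X (\<omega>, S) \<partial>measure_pmf P)"
    using nn_integral_indicator[of "{S. (\<omega>, S) \<in> X}" "measure_pmf P"] by (simp add: indicator_def)
  also have "\<dots> = (\<Sum>S\<in>Pow {0..<n}. ennreal (pmf P S) * indicator X (\<omega>, S))"
    using assms(2) by (subst nn_integral_measure_pmf_support[of "Pow {0..<n}"]) (auto simp: mult.commute)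
  finally show ?thesis .
qed

lemma measurable_tip_kernel:
  fixes N :: "'a \<Rightarrow> nat" and Q :: "nat \<Rightarrow> nat set pmf"
  assumes N: "N \<in> measurable M (count_space UNIV)"
    and Q: "\<And>n. set_pmf (Q n) \<subseteq> Pow {0..<n}"
  shows "(\<lambda>\<omega>. distr (measure_pmf (Q (N \<omega>))) (M \<Otimes>\<^sub>M count_space UNIV) (\<lambda>S. (\<omega>, S)))
           \<in> measurable M (subprob_algebra (M \<Otimes>\<^sub>M count_space UNIV))"
proof (rule measurable_compose_countable'[OF _ N])
  fix n :: nat
  show "(\<lambda>\<omega>. distr (measure_pmf (Q n)) (M \<Otimes>\<^sub>M count_space UNIV) (\<lambda>S. (\<omega>, S)))
          \<in> measurable M (subprob_algebra (M \<Otimes>\<^sub>M count_space UNIV))"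
  proof (rule measurable_subprob_algebra)
    fix \<omega> assume "\<omega> \<in> space M"
    then have "(\<lambda>S. (\<omega>, S)) \<in> measurable (measure_pmf (Q n)) (M \<Otimes>\<^sub>M count_space UNIV)"
      by (auto simp: measurable_def space_pair_measure)
    then show "subprob_space (distr (measure_pmf (Q n)) (M \<Otimes>\<^sub>M count_space UNIV) (\<lambda>S. (\<omega>, S)))"
      by (intro prob_space_imp_subprob_space prob_space.prob_space_distr prob_space_measure_pmf)
  next
    fix X :: "('a \<times> nat set) set" assume X: "X \<in> sets (M \<Otimes>\<^sub>M count_space UNIV)"
    have "(\<lambda>\<omega>. \<Sum>S\<in>Pow {0..<n}. ennreal (pmf (Q n) S) * indicator X (\<omega>, S)) \<in> borel_measurable M"
      using X by measurable
    then show "(\<lambda>\<omega>. emeasure (distr (measure_pmf (Q n)) (M \<Otimes>\<^sub>M count_space UNIV) (\<lambda>S. (\<omega>, S))) X)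
                 \<in> borel_measurable M"
      by (rule measurable_cong[THEN iffD1, rotated]) (rule emeasure_tip_kernel[OF _ Q X, symmetric])
  qed simp
qed simp

lemma space_tip_sample:
  fixes N :: "'a \<Rightarrow> nat" and Q :: "nat \<Rightarrow> nat set pmf"
  assumes "space M \<noteq> {}" "N \<in> measurable M (count_space UNIV)" "\<And>n. set_pmf (Q n) \<subseteq> Pow {0..<n}"
  shows "space (tip_sample M N Q) = space (M \<Otimes>\<^sub>M count_space UNIV)"
  using assms unfolding tip_sample_def
  by (intro space_bind measurable_tip_kernel) auto

lemma emeasure_tip_sample:
  fixes N :: "'a \<Rightarrow> nat" and Q :: "nat \<Rightarrow> nat set pmf"
  assumes "space M \<noteq> {}" and N: "N \<in> measurable M (count_space UNIV)"
    and Q: "\<And>n. set_pmf (Q n) \<subseteq> Pow {0..<n}"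
    and X: "X \<in> sets (M \<Otimes>\<^sub>M count_space UNIV)"
  shows "emeasure (tip_sample M N Q) X
     = (\<Sum>n. \<Sum>S\<in>Pow {0..<n}. ennreal (pmf (Q n) S) * emeasure M {\<omega>\<in>space M. N \<omega> = n \<and> (\<omega>, S) \<in> X})"
proof -
  define A where "A n S = {\<omega>\<in>space M. N \<omega> = n \<and> (\<omega>, S) \<in> X}" for n S
  have A: "A n S \<in> sets M" for n S
  proof -
    have "(\<lambda>\<omega>. (\<omega>, S)) \<in> measurable M (M \<Otimes>\<^sub>M count_space UNIV)"
      by (rule measurable_Pair2') simp
    then show ?thesis
      unfolding A_def using N X by measurable
  qed
  have kernel: "emeasure (distr (measure_pmf (Q (N \<omega>))) (M \<Otimes>\<^sub>M count_space UNIV) (\<lambda>S. (\<omega>, S))) X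
      = (\<Sum>n. \<Sum>S\<in>Pow {0..<n}. ennreal (pmf (Q n) S) * indicator (A n S) \<omega>)" if "\<omega> \<in> space M" for \<omega>
  proof -
    have "emeasure (distr (measure_pmf (Q (N \<omega>))) (M \<Otimes>\<^sub>M count_space UNIV) (\<lambda>S. (\<omega>, S))) X
        = (\<Sum>S\<in>Pow {0..<N \<omega>}. ennreal (pmf (Q (N \<omega>)) S) * indicator X (\<omega>, S))"
      by (rule emeasure_tip_kernel[OF that Q X])
    also have "\<dots> = (\<Sum>S\<in>Pow {0..<N \<omega>}. ennreal (pmf (Q (N \<omega>)) S) * indicator (A (N \<omega>) S) \<omega>)"
      using that by (intro sum.cong) (auto simp: A_def indicator_def)
    also have "\<dots> = (\<Sum>n. \<Sum>S\<in>Pow {0..<n}. ennreal (pmf (Q n) S) * indicator (A n S) \<omega>)"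
      by (subst suminf_finite[of "{N \<omega>}"]) (auto simp: A_def)
    finally show ?thesis .
  qed
  have "emeasure (tip_sample M N Q) X
      = (\<integral>\<^sup>+\<omega>. (\<Sum>n. \<Sum>S\<in>Pow {0..<n}. ennreal (pmf (Q n) S) * indicator (A n S) \<omega>) \<partial>M)"
    unfolding tip_sample_def using assms
    by (simp add: emeasure_bind[OF _ measurable_tip_kernel] kernel cong: nn_integral_cong)
  also have "\<dots> = (\<Sum>n. \<integral>\<^sup>+\<omega>. (\<Sum>S\<in>Pow {0..<n}. ennreal (pmf (Q n) S) * indicator (A n S) \<omega>) \<partial>M)"
    by (rule nn_integral_suminf) (use A in measurable)
  also have "\<dots> = (\<Sum>n. \<Sum>S\<in>Pow {0..<n}. ennreal (pmf (Q n) S) * emeasure M (A n S))"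
    using A by (intro suminf_cong, subst nn_integral_sum) (auto intro!: sum.cong simp: nn_integral_cmult_indicator)
  finally show ?thesis unfolding A_def .
qed

lemma measure_tip_sample_sums:
  fixes N :: "'a \<Rightarrow> nat" and Q :: "nat \<Rightarrow> nat set pmf"
  assumes "prob_space M" and N: "N \<in> measurable M (count_space UNIV)"
    and Q: "\<And>n. set_pmf (Q n) \<subseteq> Pow {0..<n}"
    and X: "X \<in> sets (M \<Otimes>\<^sub>M count_space UNIV)"
  shows "(\<lambda>n. \<Sum>S\<in>Pow {0..<n}. pmf (Q n) S * measure M {\<omega>\<in>space M. N \<omega> = n \<and> (\<omega>, S) \<in> X})
           sums measure (tip_sample M N Q) X"
proof -
  interpret prob_space M by fact
  define t where "t n = (\<Sum>S\<in>Pow {0..<n}. pmf (Q n) S * prob {\<omega>\<in>space M. N \<omega> = n \<and> (\<omega>, S) \<in> X})" for n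
  have t_nonneg: "0 \<le> t n" for n
    unfolding t_def by (intro sum_nonneg mult_nonneg_nonneg) auto
  have E: "emeasure (tip_sample M N Q) X = (\<Sum>n. ennreal (t n))"
    unfolding emeasure_tip_sample[OF not_empty N Q X] t_def
    by (simp add: emeasure_eq_measure ennreal_mult'' sum_ennreal[symmetric])
  have "subprob_space (tip_sample M N Q)"
    unfolding tip_sample_def
    by (rule subprob_space_bind[OF prob_space_imp_subprob_space measurable_tip_kernel])
       (simp_all add: prob_space_axioms N Q)
  then have "emeasure (tip_sample M N Q) X \<noteq> \<top>"
    by (rule subprob_space.emeasure_subprob_space_less_top)
  then have "summable t"
    unfolding E by (intro summable_suminf_not_top t_nonneg)
  moreover have "measure (tip_sample M N Q) X = suminf t"
    using E \<open>summable t\<close> t_nonneg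
    by (simp add: measure_def suminf_ennreal2 suminf_nonneg)
  ultimately show ?thesis
    unfolding t_def by (simp add: summable_sums)
qed

(* The weights c_n: for each set S of tips, the mass of {N = n} on which E holds for S, summed. *)

definition subset_mass :: "'a measure \<Rightarrow> ('a \<Rightarrow> nat) \<Rightarrow> ('a \<Rightarrow> nat set \<Rightarrow> bool) \<Rightarrow> nat \<Rightarrow> real" where
  "subset_mass M N E n = (\<Sum>S\<in>Pow {0..<n}. measure M {\<omega>\<in>space M. N \<omega> = n \<and> E \<omega> S})"

lemma subset_mass_nonneg: "0 \<le> subset_mass M N E n"
  unfolding subset_mass_def by (simp add: sum_nonneg)

lemma subset_mass_eq_0:
  assumes "\<And>\<omega> S. E \<omega> S \<Longrightarrow> card S = k" "n < k"
  shows "subset_mass M N E n = 0"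
  unfolding subset_mass_def
proof (intro sum.neutral ballI)
  fix S assume "S \<in> Pow {0..<n}"
  then have "card S < k" using assms(2) card_mono[of "{0..<n}" S] by auto
  then have "{\<omega>\<in>space M. N \<omega> = n \<and> E \<omega> S} = {}" using assms(1) by fastforce
  then show "measure M {\<omega>\<in>space M. N \<omega> = n \<and> E \<omega> S} = 0" by (simp only: measure_empty)
qed

lemma subset_mass_card:
  "subset_mass M N (\<lambda>_ S. card S = k) n = real (n choose k) * measure M {\<omega>\<in>space M. N \<omega> = n}"
proof -
  have "subset_mass M N (\<lambda>_ S. card S = k) n
      = (\<Sum>S\<in>Pow {0..<n}. if card S = k then measure M {\<omega>\<in>space M. N \<omega> = n} else 0)"
    unfolding subset_mass_def by (intro sum.cong) auto
  also have "\<dots> = (\<Sum>S\<in>{S. S \<subseteq> {0..<n} \<and> card S = k}. measure M {\<omega>\<in>space M. N \<omega> = n})"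
    by (simp add: sum.If_cases Collect_conj_eq Int_commute Pow_def)
  finally show ?thesis by (simp add: card_subsets_card)
qed

lemma section_Collect_pair:
  "{\<omega>\<in>space M. R \<omega> \<and> (\<omega>, S) \<in> {z\<in>space (M \<Otimes>\<^sub>M count_space UNIV). P z}} = {\<omega>\<in>space M. R \<omega> \<and> P (\<omega>, S)}"
  by (auto simp: space_pair_measure)

lemma sums_measure_tip_sample_N:
  fixes N :: "'a \<Rightarrow> nat" and Q :: "nat \<Rightarrow> nat set pmf"
  assumes "prob_space M" and N: "N \<in> measurable M (count_space UNIV)"
    and Q: "\<And>n. set_pmf (Q n) \<subseteq> Pow {0..<n}"
  shows "(\<lambda>n. if P n then measure M {\<omega>\<in>space M. N \<omega> = n} else 0)
           sums measure (tip_sample M N Q) {z\<in>space (M \<Otimes>\<^sub>M count_space UNIV). P (N (fst z))}"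
proof -
  define X :: "('a \<times> nat set) set" where "X = {z\<in>space (M \<Otimes>\<^sub>M count_space UNIV). P (N (fst z))}"
  have X: "X \<in> sets (M \<Otimes>\<^sub>M count_space UNIV)"
    unfolding X_def using N by measurable
  have "{\<omega>\<in>space M. N \<omega> = n \<and> (\<omega>, S) \<in> X} = (if P n then {\<omega>\<in>space M. N \<omega> = n} else {})" for n S
    unfolding X_def section_Collect_pair by auto
  then have "(\<Sum>S\<in>Pow {0..<n}. pmf (Q n) S * measure M {\<omega>\<in>space M. N \<omega> = n \<and> (\<omega>, S) \<in> X})
      = (\<Sum>S\<in>Pow {0..<n}. pmf (Q n) S) * (if P n then measure M {\<omega>\<in>space M. N \<omega> = n} else 0)" for n
    by (simp add: sum_distrib_right)
  moreover have "(\<Sum>S\<in>Pow {0..<n}. pmf (Q n) S) = 1" for n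
    using Q by (intro sum_pmf_eq_1) auto
  ultimately show ?thesis
    using measure_tip_sample_sums[OF assms X] unfolding X_def[symmetric] by simp
qed

lemma sums_measure_uniform_subsets:
  fixes N :: "'a \<Rightarrow> nat"
  assumes "prob_space M" and N: "N \<in> measurable M (count_space UNIV)"
    and E: "{z\<in>space (M \<Otimes>\<^sub>M count_space UNIV). E (fst z) (snd z)} \<in> sets (M \<Otimes>\<^sub>M count_space UNIV)"
    and card: "\<And>\<omega> S. E \<omega> S \<Longrightarrow> card S = k"
  shows "(\<lambda>n. subset_mass M N E n / real (n choose k)) sums measure (tip_sample M N (uniform_subsets k))
           {z\<in>space (M \<Otimes>\<^sub>M count_space UNIV). E (fst z) (snd z) \<and> k \<le> N (fst z)}"
proof -
  define X where "X = {z\<in>space (M \<Otimes>\<^sub>M count_space UNIV). E (fst z) (snd z) \<and> k \<le> N (fst z)}"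
  have "X = {z\<in>space (M \<Otimes>\<^sub>M count_space UNIV). E (fst z) (snd z)}
              \<inter> {z\<in>space (M \<Otimes>\<^sub>M count_space UNIV). k \<le> N (fst z)}"
    unfolding X_def by blast
  then have X: "X \<in> sets (M \<Otimes>\<^sub>M count_space UNIV)"
    using E N by simp
  have "pmf (uniform_subsets k n) S * measure M {\<omega>\<in>space M. N \<omega> = n \<and> (\<omega>, S) \<in> X}
      = measure M {\<omega>\<in>space M. N \<omega> = n \<and> E \<omega> S} / real (n choose k)"
    if S: "S \<subseteq> {0..<n}" for n S
  proof (cases "card S = k")
    case True
    then have "k \<le> n" using S card_mono[of "{0..<n}" S] by simp
    then show ?thesis
      using True S unfolding X_def section_Collect_pair
      by (auto simp: pmf_uniform_subsets intro!: arg_cong[where f = "measure M"])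
  next
    case False
    then have "\<not> E \<omega> S" for \<omega> using card by blast
    then show ?thesis unfolding X_def section_Collect_pair by simp
  qed
  then have "(\<Sum>S\<in>Pow {0..<n}. pmf (uniform_subsets k n) S * measure M {\<omega>\<in>space M. N \<omega> = n \<and> (\<omega>, S) \<in> X})
      = subset_mass M N E n / real (n choose k)" for n
    unfolding subset_mass_def sum_divide_distrib by (intro sum.cong) auto
  then show ?thesis
    using measure_tip_sample_sums[OF assms(1) N set_pmf_uniform_subsets[of k] X]
    unfolding X_def[symmetric] by simp
qed

lemma sums_measure_bernoulli_subset:
  fixes N :: "'a \<Rightarrow> nat"
  assumes "prob_space M" and N: "N \<in> measurable M (count_space UNIV)"
    and E: "{z\<in>space (M \<Otimes>\<^sub>M count_space UNIV). E (fst z) (snd z)} \<in> sets (M \<Otimes>\<^sub>M count_space UNIV)"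
    and card: "\<And>\<omega> S. E \<omega> S \<Longrightarrow> card S = k"
    and y: "0 \<le> y" "y \<le> 1"
  shows "(\<lambda>n. y ^ k * (1 - y) ^ (n - k) * subset_mass M N E n) sums
           measure (tip_sample M N (bernoulli_subset y)) {z\<in>space (M \<Otimes>\<^sub>M count_space UNIV). E (fst z) (snd z)}"
proof -
  define X where "X = {z\<in>space (M \<Otimes>\<^sub>M count_space UNIV). E (fst z) (snd z)}"
  have "pmf (bernoulli_subset y n) S * measure M {\<omega>\<in>space M. N \<omega> = n \<and> (\<omega>, S) \<in> X}
      = y ^ k * (1 - y) ^ (n - k) * measure M {\<omega>\<in>space M. N \<omega> = n \<and> E \<omega> S}"
    if S: "S \<subseteq> {0..<n}" for n S
  proof (cases "card S = k")
    case True
    then show ?thesis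
      using S y unfolding X_def section_Collect_pair by (simp add: pmf_bernoulli_subset)
  next
    case False
    then have "\<not> E \<omega> S" for \<omega> using card by blast
    then show ?thesis unfolding X_def section_Collect_pair by simp
  qed
  then have "(\<Sum>S\<in>Pow {0..<n}. pmf (bernoulli_subset y n) S * measure M {\<omega>\<in>space M. N \<omega> = n \<and> (\<omega>, S) \<in> X})
      = y ^ k * (1 - y) ^ (n - k) * subset_mass M N E n" for n
    unfolding subset_mass_def sum_distrib_left by (intro sum.cong) auto
  then show ?thesis
    using measure_tip_sample_sums[OF assms(1) N set_pmf_bernoulli_subset[of y] E[folded X_def]]
    unfolding X_def[symmetric] by simp
qed

lemma borel_measurable_measure_bernoulli_subset:
  fixes N :: "'a \<Rightarrow> nat"
  assumes "prob_space M" and N: "N \<in> measurable M (count_space UNIV)"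
    and X: "X \<in> sets (M \<Otimes>\<^sub>M count_space UNIV)"
  shows "(\<lambda>y. measure (tip_sample M N (bernoulli_subset y)) X) \<in> borel_measurable borel"
proof -
  define F where "F y = (\<Sum>n. \<Sum>S\<in>Pow {0..<n}.
      y ^ card S * (1 - y) ^ (n - card S) * measure M {\<omega>\<in>space M. N \<omega> = n \<and> (\<omega>, S) \<in> X})" for y
  \<comment> \<open>bernoulli_pmf clamps its parameter to [0,1], so the closed form F on [0,1] determines
    the function everywhere.\<close>
  have "measure (tip_sample M N (bernoulli_subset y)) X = F (min 1 (max 0 y))" for y
  proof -
    let ?y = "min 1 (max 0 y)"
    have "(\<lambda>n. \<Sum>S\<in>Pow {0..<n}. pmf (bernoulli_subset ?y n) S * measure M {\<omega>\<in>space M. N \<omega> = n \<and> (\<omega>, S) \<in> X})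
            sums measure (tip_sample M N (bernoulli_subset ?y)) X"
      by (rule measure_tip_sample_sums[OF assms(1) N set_pmf_bernoulli_subset X])
    moreover have "(\<lambda>n. \<Sum>S\<in>Pow {0..<n}. pmf (bernoulli_subset ?y n) S * measure M {\<omega>\<in>space M. N \<omega> = n \<and> (\<omega>, S) \<in> X})
        = (\<lambda>n. \<Sum>S\<in>Pow {0..<n}. ?y ^ card S * (1 - ?y) ^ (n - card S) * measure M {\<omega>\<in>space M. N \<omega> = n \<and> (\<omega>, S) \<in> X})"
      by (intro ext sum.cong refl) (simp add: pmf_bernoulli_subset)
    ultimately have "F ?y = measure (tip_sample M N (bernoulli_subset ?y)) X"
      unfolding F_def by (simp add: sums_iff)
    then show ?thesis by (simp flip: bernoulli_subset_clamp)
  qed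
  moreover have "(\<lambda>y. F (min 1 (max 0 y))) \<in> borel_measurable borel"
    unfolding F_def by measurable
  ultimately show ?thesis by simp
qed

lemma borel_measurable_cond_prob_bernoulli_subset:
  fixes N :: "'a \<Rightarrow> nat"
  assumes "prob_space M" and N: "N \<in> measurable M (count_space UNIV)"
    and E: "{z\<in>space (M \<Otimes>\<^sub>M count_space UNIV). E (fst z) (snd z)} \<in> sets (M \<Otimes>\<^sub>M count_space UNIV)"
  shows "(\<lambda>y. \<P>(z in tip_sample M N (bernoulli_subset y). E (fst z) (snd z) \<bar> card (snd z) = k))
           \<in> borel_measurable borel"
proof -
  define X where "X = {z\<in>space (M \<Otimes>\<^sub>M count_space UNIV). E (fst z) (snd z) \<and> card (snd z) = k}"
  have "X = {z\<in>space (M \<Otimes>\<^sub>M count_space UNIV). E (fst z) (snd z)}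
      \<inter> {z\<in>space (M \<Otimes>\<^sub>M count_space UNIV). card (snd z) = k}"
    unfolding X_def by blast
  then have "X \<in> sets (M \<Otimes>\<^sub>M count_space UNIV)"
    using E by simp
  then have "(\<lambda>y. measure (tip_sample M N (bernoulli_subset y)) X
      / measure (tip_sample M N (bernoulli_subset y)) {z\<in>space (M \<Otimes>\<^sub>M count_space UNIV). card (snd z) = k})
      \<in> borel_measurable borel"
    using borel_measurable_measure_bernoulli_subset[OF assms(1) N] by measurable
  then show ?thesis
    using assms(1) N
    by (simp add: X_def cond_prob_def space_tip_sample set_pmf_bernoulli_subset prob_space.not_empty)
qed

section \<open>The number of tips\<close>

lemma tailH_pos:
  assumes "0 < p" "p < 1" "1 < r / p"
  shows "0 < tailH p r n"
proof -
  have "p < r" using assms(1,3) by (simp add: field_simps)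
  have "1 - p \<le> (1 - p) * (r / p) ^ n"
    using assms by simp
  then show ?thesis
    unfolding tailH_def using \<open>p < r\<close> by simp
qed

lemma measurable_NT:
  assumes "\<And>i. 1 \<le> i \<Longrightarrow> H i \<in> measurable M (count_space UNIV)"
  shows "NT H T \<in> measurable M (count_space UNIV)"
  unfolding NT_def[abs_def]
proof (rule measurable_Least)
  fix i :: nat
  show "(\<lambda>\<omega>. 1 \<le> i \<and> T < H i \<omega>) \<in> measurable M (count_space UNIV)"
    using assms by (cases "1 \<le> i") auto
qed

lemma NT_eq_iff:
  assumes "1 \<le> i" "T < H i \<omega>"
  shows "NT H T \<omega> = n \<longleftrightarrow> 1 \<le> n \<and> T < H n \<omega> \<and> (\<forall>j\<in>{1..<n}. H j \<omega> \<le> T)"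
proof
  assume "NT H T \<omega> = n"
  then show "1 \<le> n \<and> T < H n \<omega> \<and> (\<forall>j\<in>{1..<n}. H j \<omega> \<le> T)"
    unfolding NT_def using assms LeastI[of "\<lambda>i. 1 \<le> i \<and> T < H i \<omega>"] not_less_Least
    by (metis atLeastLessThan_iff not_le)
next
  assume "1 \<le> n \<and> T < H n \<omega> \<and> (\<forall>j\<in>{1..<n}. H j \<omega> \<le> T)"
  then show "NT H T \<omega> = n"
    unfolding NT_def by (intro Least_equality) (auto simp: not_less[symmetric])
qed

lemma (in prob_space) prob_indep_vars_Ball:
  assumes "indep_vars (\<lambda>_. count_space UNIV) H I" "finite J" "J \<noteq> {}" "J \<subseteq> I"
  shows "prob {\<omega>\<in>space M. \<forall>j\<in>J. H j \<omega> \<in> A j} = (\<Prod>j\<in>J. prob {\<omega>\<in>space M. H j \<omega> \<in> A j})"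
proof -
  have "{\<omega>\<in>space M. \<forall>j\<in>J. H j \<omega> \<in> A j} = (\<Inter>j\<in>J. H j -` A j \<inter> space M)"
    using assms(3) by auto
  then show ?thesis
    using indep_varsD[OF assms(1,3,2,4)] by (simp add: vimage_def Int_def conj_commute)
qed

lemma (in prob_space) prob_none_exceeds:
  fixes H :: "nat \<Rightarrow> 'a \<Rightarrow> nat"
  assumes ind: "indep_vars (\<lambda>_. count_space UNIV) H {1..}"
    and \<delta>: "\<And>i. 1 \<le> i \<Longrightarrow> prob {\<omega>\<in>space M. T < H i \<omega>} = \<delta>"
  shows "prob {\<omega>\<in>space M. \<forall>j\<in>{1..m}. H j \<omega> \<le> T} = (1 - \<delta>) ^ m"
proof (cases "m = 0")
  case False
  have "prob {\<omega>\<in>space M. \<forall>j\<in>{1..m}. H j \<omega> \<in> {..T}} = (\<Prod>j\<in>{1..m}. prob {\<omega>\<in>space M. H j \<omega> \<in> {..T}})"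
    using False by (intro prob_indep_vars_Ball[OF ind]) auto
  also have "\<dots> = (\<Prod>j\<in>{1..m}. 1 - \<delta>)"
  proof (intro prod.cong refl)
    fix j :: nat assume "j \<in> {1..m}"
    then have "H j \<in> measurable M (count_space UNIV)" "prob {\<omega>\<in>space M. T < H j \<omega>} = \<delta>"
      using ind \<delta> by (auto simp: indep_vars_def)
    moreover have "{\<omega>\<in>space M. H j \<omega> \<in> {..T}} = space M - {\<omega>\<in>space M. T < H j \<omega>}"
      by auto
    ultimately show "prob {\<omega>\<in>space M. H j \<omega> \<in> {..T}} = 1 - \<delta>"
      by (simp add: prob_compl)
  qed
  finally show ?thesis by simp
qed (simp add: prob_space)

lemma (in prob_space) never_exceeds_null:
  fixes H :: "nat \<Rightarrow> 'a \<Rightarrow> nat"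
  assumes ind: "indep_vars (\<lambda>_. count_space UNIV) H {1..}"
    and \<delta>: "\<And>i. 1 \<le> i \<Longrightarrow> prob {\<omega>\<in>space M. T < H i \<omega>} = \<delta>" and "0 < \<delta>"
  shows "{\<omega>\<in>space M. \<forall>i\<ge>1. H i \<omega> \<le> T} \<in> null_sets M"
proof -
  define Z where "Z = {\<omega>\<in>space M. \<forall>i\<ge>1. H i \<omega> \<le> T}"
  have H: "H i \<in> measurable M (count_space UNIV)" if "1 \<le> i" for i
    using ind that by (auto simp: indep_vars_def)
  then have "Measurable.pred M (\<lambda>\<omega>. 1 \<le> i \<longrightarrow> H i \<omega> \<le> T)" for i
    by (cases "1 \<le> i") simp_all
  then have "Z \<in> sets M"
    unfolding Z_def by measurable
  moreover have "prob Z \<le> (1 - \<delta>) ^ m" for m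
  proof -
    have "prob Z \<le> prob {\<omega>\<in>space M. \<forall>j\<in>{1..m}. H j \<omega> \<le> T}"
      using H by (intro finite_measure_mono) (auto simp: Z_def intro!: sets.sets_Collect_finite_All)
    then show ?thesis
      using prob_none_exceeds[OF ind \<delta>, of m] by simp
  qed
  moreover have "(\<lambda>m. (1 - \<delta>) ^ m) \<longlonglongrightarrow> 0"
    using \<open>0 < \<delta>\<close> \<delta>[of 1] prob_le_1[of "{\<omega>\<in>space M. T < H 1 \<omega>}"] by (intro LIMSEQ_power_zero) simp
  ultimately have "Z \<in> sets M" "prob Z \<le> 0"
    using LIMSEQ_le_const[of _ 0 "prob Z"] by auto
  then show ?thesis
    unfolding Z_def[symmetric] using measure_nonneg[of M Z] by (simp add: null_sets_def emeasure_eq_measure)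
qed

lemma (in prob_space) prob_NT_eq:
  fixes H :: "nat \<Rightarrow> 'a \<Rightarrow> nat"
  assumes ind: "indep_vars (\<lambda>_. count_space UNIV) H {1..}"
    and \<delta>: "\<And>i. 1 \<le> i \<Longrightarrow> prob {\<omega>\<in>space M. T < H i \<omega>} = \<delta>" and "0 < \<delta>"
  shows "prob {\<omega>\<in>space M. NT H T \<omega> = n} = (if n = 0 then 0 else \<delta> * (1 - \<delta>) ^ (n - 1))"
proof -
  define Z where "Z = {\<omega>\<in>space M. \<forall>i\<ge>1. H i \<omega> \<le> T}"
  define A where "A m = {\<omega>\<in>space M. \<forall>j\<in>{1..m}. H j \<omega> \<le> T}" for m
  have H[measurable]: "H i \<in> measurable M (count_space UNIV)" if "1 \<le> i" for i
    using ind that by (auto simp: indep_vars_def)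
  have Z: "Z \<in> null_sets M"
    unfolding Z_def by (rule never_exceeds_null[OF ind \<delta> \<open>0 < \<delta>\<close>])
  have A: "A m \<in> sets M" for m
    unfolding A_def by (intro sets.sets_Collect_finite_All) auto
  have prob_A: "prob (A m) = (1 - \<delta>) ^ m" for m
    unfolding A_def by (rule prob_none_exceeds[OF ind \<delta>])
  have NT: "{\<omega>\<in>space M. NT H T \<omega> = n} \<in> sets M"
    using measurable_NT[OF H] by measurable
  \<comment> \<open>Off the null event Z, NT is the index of the first H i exceeding T; on Z it is a
    LEAST over an empty set.\<close>
  have NT_iff: "NT H T \<omega> = n \<longleftrightarrow> n \<noteq> 0 \<and> \<omega> \<in> A (n - 1) \<and> \<omega> \<notin> A n"
    if \<omega>: "\<omega> \<in> space M - Z" for \<omega>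
  proof -
    have "\<exists>i\<ge>1. T < H i \<omega>"
      using \<omega> by (auto simp: Z_def not_le)
    then obtain i where "1 \<le> i" "T < H i \<omega>" by blast
    then show ?thesis
      using \<omega> by (cases n) (auto simp: NT_eq_iff A_def atLeastLessThanSuc_atLeastAtMost atLeastAtMostSuc_conv not_le)
  qed
  have "prob {\<omega>\<in>space M. NT H T \<omega> = n} = prob ({\<omega>\<in>space M. NT H T \<omega> = n} - Z)"
    using measure_Diff_null_set[OF NT Z] by simp
  also have "{\<omega>\<in>space M. NT H T \<omega> = n} - Z = (if n = 0 then {} else A (n - 1) - A n) - Z"
    using NT_iff A[THEN sets.sets_into_space] by auto
  also have "prob \<dots> = prob (if n = 0 then {} else A (n - 1) - A n)"
    using measure_Diff_null_set[OF _ Z] A by simp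
  also have "\<dots> = (if n = 0 then 0 else \<delta> * (1 - \<delta>) ^ (n - 1))"
  proof (cases n)
    case (Suc m)
    have "A (Suc m) \<subseteq> A m" by (auto simp: A_def)
    from finite_measure_Diff[OF A A this] show ?thesis
      using Suc by (simp add: prob_A algebra_simps)
  qed simp
  finally show ?thesis .
qed

section \<open>Node depths of a sampled subtree\<close>

lemma length_sample_depths: "length (sample_depths h T S) = card S"
  unfolding sample_depths_def Let_def by simp

lemma measurable_Max_image:
  fixes H :: "'i \<Rightarrow> 'a \<Rightarrow> nat"
  assumes "finite I" "\<And>j. j \<in> I \<Longrightarrow> H j \<in> measurable M (count_space UNIV)"
  shows "(\<lambda>\<omega>. Max ((\<lambda>j. H j \<omega>) ` I)) \<in> measurable M (count_space UNIV)"
  using assms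
proof (induction I rule: finite_induct)
  case (insert a B)
  have "(\<lambda>\<omega>. Max ((\<lambda>j. H j \<omega>) ` insert a B))
      = (\<lambda>\<omega>. if B = {} then H a \<omega> else max (H a \<omega>) (Max ((\<lambda>j. H j \<omega>) ` B)))"
    using insert.hyps by auto
  moreover note [measurable] = insert.prems[of a] insert.IH
  ultimately show ?case using insert.prems by simp
qed simp

lemma pred_sample_depths_eq:
  assumes "\<And>i. 1 \<le> i \<Longrightarrow> H i \<in> measurable M (count_space UNIV)"
  shows "Measurable.pred M (\<lambda>\<omega>. sample_depths (\<lambda>i. H i \<omega>) T S = xs)"
proof -
  define s where "s = sorted_list_of_set S"
  have [measurable]: "(\<lambda>\<omega>. Max ((\<lambda>j. H j \<omega>) ` {a<..b})) \<in> measurable M (count_space UNIV)" for a b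
    using assms by (intro measurable_Max_image) auto
  have "sample_depths (\<lambda>i. H i \<omega>) T S = xs \<longleftrightarrow> length xs = card S \<and>
      (\<forall>i<card S. (if i = 0 then T else Max ((\<lambda>j. H j \<omega>) ` {s ! (i - 1)<..s ! i})) = xs ! i)" for \<omega>
    unfolding sample_depths_def Let_def s_def list_eq_iff_nth_eq by auto
  then show ?thesis by simp
qed

lemma sets_Collect_pair_finite:
  fixes P :: "'a \<Rightarrow> 'b::countable set \<Rightarrow> bool"
  assumes "\<And>S. finite S \<Longrightarrow> Measurable.pred M (\<lambda>\<omega>. P \<omega> S)" "\<And>\<omega> S. P \<omega> S \<Longrightarrow> finite S"
  shows "{z\<in>space (M \<Otimes>\<^sub>M count_space UNIV). P (fst z) (snd z)} \<in> sets (M \<Otimes>\<^sub>M count_space UNIV)"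
proof -
  have "{z\<in>space (M \<Otimes>\<^sub>M count_space UNIV). P (fst z) (snd z)} = (\<Union>S\<in>{S. finite S}. {\<omega>\<in>space M. P \<omega> S} \<times> {S})"
    using assms(2) by (auto simp: space_pair_measure)
  also have "\<dots> \<in> sets (M \<Otimes>\<^sub>M count_space UNIV)"
    using assms(1) by (intro sets.countable_UN' countable_Collect_finite) auto
  finally show ?thesis .
qed

section \<open>Series and Beta integrals\<close>

lemma negative_binomial_sums:
  fixes z :: real
  assumes "\<bar>z\<bar> < 1"
  shows "(\<lambda>n. real (n choose k) * z ^ (n - k)) sums (1 / (1 - z) ^ (k + 1))"
proof -
  have "(\<lambda>n. (- real (k + 1) gchoose n) * (- z) ^ n) sums (1 + - z) powr - real (k + 1)"
    using assms by (intro gen_binomial_real) simp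
  moreover have "(- real (k + 1) gchoose n) * (- z) ^ n = real ((n + k) choose k) * z ^ (n + k - k)" for n
  proof -
    have "(- real (k + 1) gchoose n) = (- 1) ^ n * ((real (k + 1) + real n - 1) gchoose n)"
      by (rule gbinomial_minus)
    also have "real (k + 1) + real n - 1 = real (n + k)"
      by simp
    also have "real (n + k) gchoose n = real ((n + k) choose n)"
      by (simp only: binomial_gbinomial)
    also have "(n + k) choose n = (n + k) choose k"
      by (metis add_diff_cancel_left' binomial_symmetric le_add2 add.commute)
    finally have "(- real (k + 1) gchoose n) = (- 1) ^ n * real ((n + k) choose k)" .
    moreover have "(- z) ^ n = (- 1) ^ n * z ^ n"
      by (rule power_minus)
    ultimately show ?thesis
      by (simp add: power_mult_distrib[symmetric])
  qed
  moreover have "(1 + - z) powr - real (k + 1) = 1 / (1 - z) ^ (k + 1)"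
  proof -
    have "0 < 1 - z" using assms by simp
    then have "(1 - z) powr - real (k + 1) = 1 / (1 - z) powr real (k + 1)"
      by (metis powr_minus_divide)
    also have "(1 - z) powr real (k + 1) = (1 - z) ^ (k + 1)"
      using \<open>0 < 1 - z\<close> by (rule powr_realpow)
    finally show ?thesis by simp
  qed
  ultimately have "(\<lambda>n. real ((n + k) choose k) * z ^ (n + k - k)) sums (1 / (1 - z) ^ (k + 1))"
    by (simp only:)
  then show ?thesis
    by (subst (asm) sums_zero_iff_shift[where f = "\<lambda>n. real (n choose k) * z ^ (n - k)"]) auto
qed

lemma nn_integral_beta_nat:
  assumes "1 \<le> k" "k \<le> n"
  shows "(\<integral>\<^sup>+y. ennreal (y ^ (k - 1) * (1 - y) ^ (n - k)) * indicator {0<..<1} y \<partial>lborel)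
       = ennreal (1 / (real k * real (n choose k)))"
proof -
  have "((\<lambda>t. t powr (real k - 1) * (1 - t) powr (real (n - k + 1) - 1))
          has_integral Beta (real k) (real (n - k + 1))) {0<..<1}"
    using has_integral_Beta_real[of "real k" "real (n - k + 1)"] assms
    by (simp only: has_integral_Icc_iff_Ioo)
  moreover have "t ^ (k - 1) * (1 - t) ^ (n - k) = t powr (real k - 1) * (1 - t) powr (real (n - k + 1) - 1)"
    if "t \<in> {0<..<1}" for t
    using that assms by (simp add: powr_realpow[symmetric])
  ultimately have beta: "((\<lambda>t. t ^ (k - 1) * (1 - t) ^ (n - k)) has_integral Beta (real k) (real (n - k + 1))) {0<..<1}"
    by (rule has_integral_cong[THEN iffD2, rotated])
  have "(\<integral>\<^sup>+y. ennreal (y ^ (k - 1) * (1 - y) ^ (n - k)) * indicator {0<..<1} y \<partial>lborel)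
      = ennreal (Beta (real k) (real (n - k + 1)))"
    by (intro nn_integral_has_integral_lebesgue'[OF _ beta]) simp
  also have "Beta (real k) (real (n - k + 1)) = fact (k - 1) * fact (n - k) / fact n"
  proof -
    have "Gamma (real k) = fact (k - 1)"
      using Gamma_fact[of "k - 1"] assms by simp
    moreover have "Gamma (1 + real (n - k)) = fact (n - k)"
      using Gamma_fact[of "n - k"] by simp
    moreover have "real k + (1 + real (n - k)) = 1 + real n"
      using assms by simp
    then have "Gamma (real k + (1 + real (n - k))) = fact n"
      by (simp only: Gamma_fact)
    ultimately show ?thesis by (simp add: Beta_def)
  qed
  also have "\<dots> = 1 / (real k * real (n choose k))"
  proof -
    have "fact k = real k * fact (k - 1)"
      using assms by (intro fact_reduce) simp
    then have "real (n choose k) = fact n / (real k * fact (k - 1) * fact (n - k))"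
      using assms by (simp add: binomial_fact)
    then show ?thesis
      using assms by (simp add: field_simps)
  qed
  finally show ?thesis .
qed

lemma geometric_tail_sums:
  fixes \<delta> :: real
  assumes "1 \<le> k" "0 < \<delta>" "\<delta> \<le> 1"
  shows "(\<lambda>n. if k \<le> n then (if n = 0 then 0 else \<delta> * (1 - \<delta>) ^ (n - 1)) else 0) sums (1 - \<delta>) ^ (k - 1)"
proof -
  have "(\<lambda>m. \<delta> * (1 - \<delta>) ^ (k - 1) * (1 - \<delta>) ^ m) sums (\<delta> * (1 - \<delta>) ^ (k - 1) * (1 / (1 - (1 - \<delta>))))"
    using assms by (intro sums_mult geometric_sums) simp
  moreover have "\<delta> * (1 - \<delta>) ^ (k - 1) * (1 - \<delta>) ^ m
      = (if k \<le> m + k then (if m + k = 0 then 0 else \<delta> * (1 - \<delta>) ^ (m + k - 1)) else 0)" for m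
  proof -
    obtain j where "k = Suc j" using assms(1) by (cases k) auto
    then show ?thesis by (simp add: power_add mult.commute)
  qed
  moreover have "\<delta> * (1 - \<delta>) ^ (k - 1) * (1 / (1 - (1 - \<delta>))) = (1 - \<delta>) ^ (k - 1)"
    using assms by simp
  ultimately have "(\<lambda>m. if k \<le> m + k then (if m + k = 0 then 0 else \<delta> * (1 - \<delta>) ^ (m + k - 1)) else 0)
      sums (1 - \<delta>) ^ (k - 1)"
    by (simp only:)
  then show ?thesis
    by (subst (asm) sums_zero_iff_shift) auto
qed

lemma binomial_geometric_sums:
  fixes \<delta> y :: real
  assumes "1 \<le> k" "0 < \<delta>" "\<delta> \<le> 1" "0 \<le> y" "y \<le> 1"
  shows "(\<lambda>n. y ^ k * (1 - y) ^ (n - k) * (real (n choose k) * (if n = 0 then 0 else \<delta> * (1 - \<delta>) ^ (n - 1))))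
           sums (\<delta> * (1 - \<delta>) ^ (k - 1) * y ^ k / (1 - (1 - \<delta>) * (1 - y)) ^ (k + 1))"
proof -
  have "0 \<le> (1 - \<delta>) * (1 - y)" "(1 - \<delta>) * (1 - y) \<le> 1 - \<delta>"
    using assms by (simp_all add: mult_left_le)
  then have "\<bar>(1 - \<delta>) * (1 - y)\<bar> < 1"
    using assms by simp
  from sums_mult[OF negative_binomial_sums[OF this], of "\<delta> * (1 - \<delta>) ^ (k - 1) * y ^ k"]
  have "(\<lambda>n. \<delta> * (1 - \<delta>) ^ (k - 1) * y ^ k * (real (n choose k) * ((1 - \<delta>) * (1 - y)) ^ (n - k)))
      sums (\<delta> * (1 - \<delta>) ^ (k - 1) * y ^ k / (1 - (1 - \<delta>) * (1 - y)) ^ (k + 1))"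
    by simp
  moreover have "\<delta> * (1 - \<delta>) ^ (k - 1) * y ^ k * (real (n choose k) * ((1 - \<delta>) * (1 - y)) ^ (n - k))
      = y ^ k * (1 - y) ^ (n - k) * (real (n choose k) * (if n = 0 then 0 else \<delta> * (1 - \<delta>) ^ (n - 1)))" for n
  proof (cases "k \<le> n")
    case True
    then have "(1 - \<delta>) ^ (n - 1) = (1 - \<delta>) ^ (k - 1) * (1 - \<delta>) ^ (n - k)"
      using assms(1) by (simp add: power_add[symmetric])
    then show ?thesis
      using True assms(1) by (simp add: power_mult_distrib)
  qed simp
  ultimately show ?thesis by (simp only:)
qed

(* When delta = 1 < k the factor (1 - delta)^(k-1) vanishes; both sides are then 0, since x / 0 = 0. *)
lemma mu_density_mult_ratio:
  assumes "1 \<le> k" "0 < \<delta>" "\<delta> \<le> 1" "0 < y" "y < 1"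
  shows "real k * \<delta> * y ^ (k - 1) / (1 - (1 - \<delta>) * (1 - y)) ^ (k + 1)
           * (s / (\<delta> * (1 - \<delta>) ^ (k - 1) * y ^ k / (1 - (1 - \<delta>) * (1 - y)) ^ (k + 1)))
         = real k / ((1 - \<delta>) ^ (k - 1) * y) * s"
proof (cases "(1 - \<delta>) ^ (k - 1) = 0")
  case False
  define D where "D = 1 - (1 - \<delta>) * (1 - y)"
  have "0 < D"
    unfolding D_def using assms mult_left_le[of "1 - y" "1 - \<delta>"] by simp
  moreover have "y ^ k = y * y ^ (k - 1)"
    using assms(1) by (cases k) auto
  ultimately show ?thesis
    unfolding D_def[symmetric] using False assms by (simp add: field_simps)
qed (simp del: power_eq_0_iff)

lemma sums_mu_density_mult_ratio:
  fixes c :: "nat \<Rightarrow> real"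
  assumes "1 \<le> k" "0 < \<delta>" "\<delta> \<le> 1" "0 < y" "y < 1"
    and "summable (\<lambda>n. y ^ k * (1 - y) ^ (n - k) * c n)"
  shows "(\<lambda>n. real k / (1 - \<delta>) ^ (k - 1) * c n * (y ^ (k - 1) * (1 - y) ^ (n - k))) sums
           (real k * \<delta> * y ^ (k - 1) / (1 - (1 - \<delta>) * (1 - y)) ^ (k + 1)
             * ((\<Sum>n. y ^ k * (1 - y) ^ (n - k) * c n)
                 / (\<delta> * (1 - \<delta>) ^ (k - 1) * y ^ k / (1 - (1 - \<delta>) * (1 - y)) ^ (k + 1))))"
proof -
  have "y ^ k = y * y ^ (k - 1)"
    using assms(1) by (cases k) auto
  then have "(\<lambda>n. real k / (1 - \<delta>) ^ (k - 1) * c n * (y ^ (k - 1) * (1 - y) ^ (n - k))) sums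
      (real k / ((1 - \<delta>) ^ (k - 1) * y) * (\<Sum>n. y ^ k * (1 - y) ^ (n - k) * c n))"
    using sums_mult[OF summable_sums[OF assms(6)], of "real k / ((1 - \<delta>) ^ (k - 1) * y)"] assms(4)
    by (simp add: field_simps)
  also have "real k / ((1 - \<delta>) ^ (k - 1) * y) * (\<Sum>n. y ^ k * (1 - y) ^ (n - k) * c n)
      = real k * \<delta> * y ^ (k - 1) / (1 - (1 - \<delta>) * (1 - y)) ^ (k + 1)
          * ((\<Sum>n. y ^ k * (1 - y) ^ (n - k) * c n)
              / (\<delta> * (1 - \<delta>) ^ (k - 1) * y ^ k / (1 - (1 - \<delta>) * (1 - y)) ^ (k + 1)))"
    by (rule mu_density_mult_ratio[OF assms(1-5), symmetric])
  finally show ?thesis .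
qed

lemma nn_integral_mu_mixture:
  fixes c :: "nat \<Rightarrow> real" and g :: "real \<Rightarrow> real"
  assumes k: "1 \<le> k" and \<delta>: "0 < \<delta>" "\<delta> \<le> 1"
    and c_nonneg: "\<And>n. 0 \<le> c n" and c_eq_0: "\<And>n. n < k \<Longrightarrow> c n = 0"
    and summable_y: "\<And>y. 0 < y \<Longrightarrow> y < 1 \<Longrightarrow> summable (\<lambda>n. y ^ k * (1 - y) ^ (n - k) * c n)"
    and g_meas: "g \<in> borel_measurable borel"
    and g: "\<And>y. 0 < y \<Longrightarrow> y < 1 \<Longrightarrow> g y = (\<Sum>n. y ^ k * (1 - y) ^ (n - k) * c n)
              / (\<delta> * (1 - \<delta>) ^ (k - 1) * y ^ k / (1 - (1 - \<delta>) * (1 - y)) ^ (k + 1))"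
  shows "(\<integral>\<^sup>+y. ennreal (g y) \<partial>mu k \<delta>) = (\<Sum>n. ennreal (c n / real (n choose k) / (1 - \<delta>) ^ (k - 1)))"
proof -
  define Q where "Q = (1 - \<delta>) ^ (k - 1)"
  define \<rho> where "\<rho> y = indicator {0<..<1} y * (real k * \<delta> * y ^ (k - 1) / (1 - (1 - \<delta>) * (1 - y)) ^ (k + 1))"
    for y
  define t where "t n y = ennreal (real k / Q * c n) * (ennreal (y ^ (k - 1) * (1 - y) ^ (n - k)) * indicator {0<..<1} y)"
    for n y
  have "0 \<le> Q" unfolding Q_def using \<delta> by simp
  have pointwise: "ennreal (\<rho> y) * ennreal (g y) = (\<Sum>n. t n y)" for y
  proof (cases "y \<in> {0<..<1}")
    case True
    then have y: "0 < y" "y < 1" by auto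
    have "(\<lambda>n. real k / Q * c n * (y ^ (k - 1) * (1 - y) ^ (n - k))) sums (\<rho> y * g y)"
      using sums_mu_density_mult_ratio[OF k \<delta> y summable_y[OF y]] True
      by (simp only: \<rho>_def g[OF y] indicator_simps mult_1 Q_def)
    moreover have "0 \<le> real k / Q * c n * (y ^ (k - 1) * (1 - y) ^ (n - k))" for n
      using \<open>0 \<le> Q\<close> c_nonneg y by simp
    moreover have "0 \<le> \<rho> y"
      using y \<delta> mult_left_le[of "1 - y" "1 - \<delta>"] by (simp add: \<rho>_def)
    ultimately show ?thesis
      using y \<open>0 \<le> Q\<close> c_nonneg
      by (simp add: t_def ennreal_mult'[symmetric] ennreal_mult[symmetric] suminf_ennreal2 sums_iff)
  qed (simp add: \<rho>_def t_def)
  have integral_t: "(\<integral>\<^sup>+y. t n y \<partial>lborel) = ennreal (c n / real (n choose k) / Q)" for n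
  proof (cases "k \<le> n")
    case True
    have "(\<integral>\<^sup>+y. t n y \<partial>lborel) = ennreal (real k / Q * c n) * ennreal (1 / (real k * real (n choose k)))"
      unfolding t_def by (subst nn_integral_cmult) (measurable, simp only: nn_integral_beta_nat[OF k True])
    also have "\<dots> = ennreal (c n / real (n choose k) / Q)"
      using \<open>0 \<le> Q\<close> c_nonneg[of n] k by (simp add: ennreal_mult[symmetric])
    finally show ?thesis .
  qed (simp add: t_def c_eq_0)
  have "(\<integral>\<^sup>+y. ennreal (g y) \<partial>mu k \<delta>) = (\<integral>\<^sup>+y. ennreal (\<rho> y) * ennreal (g y) \<partial>lborel)"
    unfolding mu_def \<rho>_def[symmetric] using g_meas by (intro nn_integral_density) (auto simp: \<rho>_def)
  also have "\<dots> = (\<Sum>n. \<integral>\<^sup>+y. t n y \<partial>lborel)"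
    unfolding pointwise t_def by (rule nn_integral_suminf) measurable
  finally show ?thesis
    by (simp add: integral_t Q_def)
qed

lemma integral_mu_mixture:
  fixes c :: "nat \<Rightarrow> real" and g :: "real \<Rightarrow> real"
  assumes k: "1 \<le> k" and \<delta>: "0 < \<delta>" "\<delta> \<le> 1"
    and c_nonneg: "\<And>n. 0 \<le> c n" and c_eq_0: "\<And>n. n < k \<Longrightarrow> c n = 0"
    and summable_c: "summable (\<lambda>n. c n / real (n choose k))"
    and summable_y: "\<And>y. 0 < y \<Longrightarrow> y < 1 \<Longrightarrow> summable (\<lambda>n. y ^ k * (1 - y) ^ (n - k) * c n)"
    and g_meas: "g \<in> borel_measurable borel" and g_nonneg: "\<And>y. 0 \<le> g y"
    and g: "\<And>y. 0 < y \<Longrightarrow> y < 1 \<Longrightarrow> g y = (\<Sum>n. y ^ k * (1 - y) ^ (n - k) * c n)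
              / (\<delta> * (1 - \<delta>) ^ (k - 1) * y ^ k / (1 - (1 - \<delta>) * (1 - y)) ^ (k + 1))"
  shows "(\<integral>y. g y \<partial>mu k \<delta>) = (\<Sum>n. c n / real (n choose k)) / (1 - \<delta>) ^ (k - 1)"
proof -
  have "(\<integral>y. g y \<partial>mu k \<delta>) = enn2real (\<integral>\<^sup>+y. ennreal (g y) \<partial>mu k \<delta>)"
    using g_meas g_nonneg by (intro integral_eq_nn_integral) (simp_all add: mu_def)
  also have "(\<integral>\<^sup>+y. ennreal (g y) \<partial>mu k \<delta>) = (\<Sum>n. ennreal (c n / real (n choose k) / (1 - \<delta>) ^ (k - 1)))"
    by (rule nn_integral_mu_mixture[OF k \<delta> c_nonneg c_eq_0 summable_y g_meas g])
  also have "\<dots> = ennreal (\<Sum>n. c n / real (n choose k) / (1 - \<delta>) ^ (k - 1))"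
    using summable_divide[OF summable_c] c_nonneg \<delta> by (intro suminf_ennreal2) auto
  also have "(\<Sum>n. c n / real (n choose k) / (1 - \<delta>) ^ (k - 1)) = (\<Sum>n. c n / real (n choose k)) / (1 - \<delta>) ^ (k - 1)"
    by (rule suminf_divide[OF summable_c])
  finally show ?thesis
    using suminf_nonneg[OF summable_c] c_nonneg \<delta> by simp
qed

section \<open>Mixing Bernoulli samples against mu_k\<close>

locale geometric_tip_count = prob_space M for M :: "'a measure" +
  fixes N :: "'a \<Rightarrow> nat" and \<delta> :: real
  assumes measurable_N: "N \<in> measurable M (count_space UNIV)"
    and prob_N_eq: "\<And>n. prob {\<omega>\<in>space M. N \<omega> = n} = (if n = 0 then 0 else \<delta> * (1 - \<delta>) ^ (n - 1))"
    and delta_pos: "0 < \<delta>"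
begin

lemma delta_le_1: "\<delta> \<le> 1"
  using prob_N_eq[of 1] prob_le_1[of "{\<omega>\<in>space M. N \<omega> = 1}"] by simp

lemma cond_prob_uniform_subsets:
  assumes "1 \<le> k"
    and E: "{z\<in>space (M \<Otimes>\<^sub>M count_space UNIV). E (fst z) (snd z)} \<in> sets (M \<Otimes>\<^sub>M count_space UNIV)"
    and card: "\<And>\<omega> S. E \<omega> S \<Longrightarrow> card S = k"
  shows "\<P>(z in tip_sample M N (uniform_subsets k). E (fst z) (snd z) \<bar> k \<le> N (fst z))
       = (\<Sum>n. subset_mass M N E n / real (n choose k)) / (1 - \<delta>) ^ (k - 1)"
proof -
  have "(\<lambda>n. if k \<le> n then (if n = 0 then 0 else \<delta> * (1 - \<delta>) ^ (n - 1)) else 0)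
      sums measure (tip_sample M N (uniform_subsets k)) {z\<in>space (M \<Otimes>\<^sub>M count_space UNIV). k \<le> N (fst z)}"
    using sums_measure_tip_sample_N[OF prob_space_axioms measurable_N set_pmf_uniform_subsets[of k]]
    by (simp only: prob_N_eq)
  then have "measure (tip_sample M N (uniform_subsets k)) {z\<in>space (M \<Otimes>\<^sub>M count_space UNIV). k \<le> N (fst z)}
      = (1 - \<delta>) ^ (k - 1)"
    using geometric_tail_sums[OF assms(1) delta_pos delta_le_1] by (rule sums_unique2)
  then show ?thesis
    using sums_unique[OF sums_measure_uniform_subsets[OF prob_space_axioms measurable_N E card]]
    by (simp add: cond_prob_def space_tip_sample[OF not_empty measurable_N set_pmf_uniform_subsets])
qed

lemma cond_prob_bernoulli_subset:
  assumes "1 \<le> k"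
    and E: "{z\<in>space (M \<Otimes>\<^sub>M count_space UNIV). E (fst z) (snd z)} \<in> sets (M \<Otimes>\<^sub>M count_space UNIV)"
    and card: "\<And>\<omega> S. E \<omega> S \<Longrightarrow> card S = k"
    and y: "0 \<le> y" "y \<le> 1"
  shows "\<P>(z in tip_sample M N (bernoulli_subset y). E (fst z) (snd z) \<bar> card (snd z) = k)
       = (\<Sum>n. y ^ k * (1 - y) ^ (n - k) * subset_mass M N E n)
           / (\<delta> * (1 - \<delta>) ^ (k - 1) * y ^ k / (1 - (1 - \<delta>) * (1 - y)) ^ (k + 1))"
proof -
  have "{z\<in>space (M \<Otimes>\<^sub>M count_space UNIV). card (snd z) = k} \<in> sets (M \<Otimes>\<^sub>M count_space UNIV)"
    by measurable
  then have "(\<lambda>n. y ^ k * (1 - y) ^ (n - k) * (real (n choose k) * (if n = 0 then 0 else \<delta> * (1 - \<delta>) ^ (n - 1))))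
      sums measure (tip_sample M N (bernoulli_subset y)) {z\<in>space (M \<Otimes>\<^sub>M count_space UNIV). card (snd z) = k}"
    using sums_measure_bernoulli_subset[OF prob_space_axioms measurable_N _ _ y, where E = "\<lambda>_ S. card S = k" and k = k]
    by (simp only: subset_mass_card prob_N_eq) blast
  then have "measure (tip_sample M N (bernoulli_subset y)) {z\<in>space (M \<Otimes>\<^sub>M count_space UNIV). card (snd z) = k}
      = \<delta> * (1 - \<delta>) ^ (k - 1) * y ^ k / (1 - (1 - \<delta>) * (1 - y)) ^ (k + 1)"
    using binomial_geometric_sums[OF assms(1) delta_pos delta_le_1 y] by (rule sums_unique2)
  moreover have "{z\<in>space (M \<Otimes>\<^sub>M count_space UNIV). E (fst z) (snd z) \<and> card (snd z) = k}
      = {z\<in>space (M \<Otimes>\<^sub>M count_space UNIV). E (fst z) (snd z)}"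
    using card by blast
  ultimately show ?thesis
    using sums_unique[OF sums_measure_bernoulli_subset[OF prob_space_axioms measurable_N E card y]]
    by (simp add: cond_prob_def space_tip_sample[OF not_empty measurable_N set_pmf_bernoulli_subset])
qed

lemma cond_prob_uniform_subsets_eq_integral:
  assumes "1 \<le> k"
    and E: "{z\<in>space (M \<Otimes>\<^sub>M count_space UNIV). E (fst z) (snd z)} \<in> sets (M \<Otimes>\<^sub>M count_space UNIV)"
    and card: "\<And>\<omega> S. E \<omega> S \<Longrightarrow> card S = k"
  shows "\<P>(z in tip_sample M N (uniform_subsets k). E (fst z) (snd z) \<bar> k \<le> N (fst z))
       = (\<integral>y. \<P>(z in tip_sample M N (bernoulli_subset y). E (fst z) (snd z) \<bar> card (snd z) = k) \<partial>mu k \<delta>)"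
proof -
  have "summable (\<lambda>n. subset_mass M N E n / real (n choose k))"
    using sums_measure_uniform_subsets[OF prob_space_axioms measurable_N E card] by (simp add: sums_iff)
  moreover have "summable (\<lambda>n. y ^ k * (1 - y) ^ (n - k) * subset_mass M N E n)" if "0 < y" "y < 1" for y
    using sums_measure_bernoulli_subset[OF prob_space_axioms measurable_N E card] that by (simp add: sums_iff)
  moreover have "0 \<le> \<P>(z in tip_sample M N (bernoulli_subset y). E (fst z) (snd z) \<bar> card (snd z) = k)" for y
    by (simp add: cond_prob_def)
  ultimately have "(\<Sum>n. subset_mass M N E n / real (n choose k)) / (1 - \<delta>) ^ (k - 1)
      = (\<integral>y. \<P>(z in tip_sample M N (bernoulli_subset y). E (fst z) (snd z) \<bar> card (snd z) = k) \<partial>mu k \<delta>)"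
    by (intro integral_mu_mixture[symmetric, OF assms(1) delta_pos delta_le_1 subset_mass_nonneg subset_mass_eq_0[OF card]]
          borel_measurable_cond_prob_bernoulli_subset[OF prob_space_axioms measurable_N E])
       (auto simp: cond_prob_bernoulli_subset[OF assms])
  then show ?thesis
    by (simp only: cond_prob_uniform_subsets[OF assms])
qed

end

theorem theorem2p8:
  fixes M :: "'a measure" and H :: "nat \<Rightarrow> 'a \<Rightarrow> nat"
    and p r :: real and T k :: nat and xs :: "nat list"
  assumes "prob_space M"
    and "0 < p" "p < 1" "0 \<le> r" "r \<le> 1" "p \<noteq> r" "r / p > 1"
    and "prob_space.indep_vars M (\<lambda>_. count_space UNIV) H {1..}"
    and "\<forall>i\<ge>1. \<forall>n. measure M {\<omega> \<in> space M. n < H i \<omega>} = tailH p r n"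
    and "1 \<le> k"
    and "length xs = k" "xs ! 0 = T" "\<forall>i\<in>{1..<k}. xs ! i \<in> {1..T}"
  shows "\<P>(z in k_sample M H T k. sample_depths (\<lambda>i. H i (fst z)) T (snd z) = xs
              \<bar> k \<le> NT H T (fst z))
       = (\<integral>y. \<P>(z in bern_sample M H T y. sample_depths (\<lambda>i. H i (fst z)) T (snd z) = xs
                      \<bar> card (snd z) = k)
            \<partial>(mu k (measure M {\<omega> \<in> space M. T < H 1 \<omega>})))"
proof -
  interpret prob_space M by fact
  define \<delta> where "\<delta> = prob {\<omega>\<in>space M. T < H 1 \<omega>}"
  have H: "H i \<in> measurable M (count_space UNIV)" if "1 \<le> i" for i
    using assms(8) that by (auto simp: indep_vars_def)
  have \<delta>_i: "prob {\<omega>\<in>space M. T < H i \<omega>} = \<delta>" if "1 \<le> i" for i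
    using assms(9) that by (simp add: \<delta>_def)
  have "0 < \<delta>"
    using assms(9) tailH_pos[OF assms(2,3,7)] by (simp add: \<delta>_def)
  interpret geometric_tip_count M "NT H T" \<delta>
    using measurable_NT[OF H] prob_NT_eq[OF assms(8) \<delta>_i \<open>0 < \<delta>\<close>] \<open>0 < \<delta>\<close>
    by unfold_locales auto
  have card: "card S = k" if "sample_depths (\<lambda>i. H i \<omega>) T S = xs" for \<omega> S
    using that length_sample_depths assms(11) by metis
  have "finite S" if "sample_depths (\<lambda>i. H i \<omega>) T S = xs" for \<omega> S
    using card[OF that] assms(10) card.infinite by force
  then have "{z\<in>space (M \<Otimes>\<^sub>M count_space UNIV). sample_depths (\<lambda>i. H i (fst z)) T (snd z) = xs}
      \<in> sets (M \<Otimes>\<^sub>M count_space UNIV)"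
    by (intro sets_Collect_pair_finite[where P = "\<lambda>\<omega> S. sample_depths (\<lambda>i. H i \<omega>) T S = xs"]
        pred_sample_depths_eq[OF H])
  then show ?thesis
    unfolding k_sample_eq_tip_sample bern_sample_eq_tip_sample \<delta>_def[symmetric]
    by (rule cond_prob_uniform_subsets_eq_integral[OF assms(10) _ card])
qed

end
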